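(* Let $(X,d,\mu)$ be an unbounded space of homogeneous type with geometric constants $\tau$ and $A$, let $0<\gamma<\tfrac1\tau$, $H\geq1$, and let $\mathcal{K}$ be a family of symmetric Markov kernels on $X$ with $\mathcal{K}\subset\mathcal{H}(\gamma,H)$. For $K\in\mathcal{K}$ define $\widetilde K(x,x)=K(x,x)$ and, for $x\neq y$, \[\widetilde K(x,y)=\frac{1}{\mu(B(y,\gamma d(x,y)))}\int_{B(y,\gamma d(x,y))}K(x,z)\,d\mu(z).\] Then for every $K\in\mathcal{K}$ and every $(x,y)\in X\times X$, $K(x,y)\leq H\widetilde K(x,y)\leq H^2K(x,y)$.
   Context: A quasi-distance on $X$ is a nonnegative symmetric function $d$ vanishing exactly on the diagonal with $d(x,z)\leq\tau[d(x,y)+d(y,z)]$, $\tau\geq1$; balls are $B(x,r)=\{y:d(x,y)<r\}$. $(X,d,\mu)$ is a space of homogeneous type if $\mu$ is a positive measure on a $\sigma$-algebra containing all balls with $0<\mu(B(x,2r))\leq A\mu(B(x,r))<\infty$; $\tau,A$ are the geometric constants; unbounded means $\mu(X)=\infty$. A symmetric Markov kernel is a nonnegative symmetric measurable $K$ on $X\times X$ with $\int_XK(x,y)d\mu(y)=1$ for all $x$. $K\in\mathcal{H}(\gamma,H)$ means $\sup_{\eta\in B(y,\gamma d(x,y))}K(x,\eta)\leq H\inf_{\eta\in B(y,\gamma d(x,y))}K(x,\eta)$ for all $x\neq y$. *)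

theory Defs
  imports "HOL-Analysis.Analysis" "HOL-Probability.Probability"
begin

definition quasi_distance :: "'a set \<Rightarrow> ('a \<Rightarrow> 'a \<Rightarrow> real) \<Rightarrow> real \<Rightarrow> bool" where
  "quasi_distance X d \<tau> \<longleftrightarrow> \<tau> \<ge> 1 \<and>
     (\<forall>x\<in>X. \<forall>y\<in>X. d x y \<ge> 0 \<and> d x y = d y x \<and> (d x y = 0 \<longleftrightarrow> x = y)) \<and>
     (\<forall>x\<in>X. \<forall>y\<in>X. \<forall>z\<in>X. d x z \<le> \<tau> * (d x y + d y z))"

definition qball :: "'a set \<Rightarrow> ('a \<Rightarrow> 'a \<Rightarrow> real) \<Rightarrow> 'a \<Rightarrow> real \<Rightarrow> 'a set" where
  "qball X d x r = {y\<in>X. d x y < r}"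

definition homogeneous_type :: "'a measure \<Rightarrow> ('a \<Rightarrow> 'a \<Rightarrow> real) \<Rightarrow> real \<Rightarrow> real \<Rightarrow> bool" where
  "homogeneous_type M d \<tau> A \<longleftrightarrow> quasi_distance (space M) d \<tau> \<and>
     (\<forall>x\<in>space M. \<forall>r. qball (space M) d x r \<in> sets M) \<and>
     (\<forall>x\<in>space M. \<forall>r>0.
        0 < emeasure M (qball (space M) d x (2*r)) \<and>
        emeasure M (qball (space M) d x (2*r)) \<le> ennreal A * emeasure M (qball (space M) d x r) \<and>
        emeasure M (qball (space M) d x r) < \<infinity>)"

definition unbounded_space :: "'a measure \<Rightarrow> bool" where
  "unbounded_space M \<longleftrightarrow> emeasure M (space M) = \<infinity>"

definition symmetric_markov_kernel :: "'a measure \<Rightarrow> ('a \<Rightarrow> 'a \<Rightarrow> real) \<Rightarrow> bool" where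
  "symmetric_markov_kernel M K \<longleftrightarrow>
     (\<lambda>(x,y). K x y) \<in> borel_measurable (M \<Otimes>\<^sub>M M) \<and>
     (\<forall>x\<in>space M. \<forall>y\<in>space M. K x y \<ge> 0 \<and> K x y = K y x) \<and>
     (\<forall>x\<in>space M. (\<integral>\<^sup>+ y. ennreal (K x y) \<partial>M) = 1)"

definition kernel_class_H :: "'a measure \<Rightarrow> ('a \<Rightarrow> 'a \<Rightarrow> real) \<Rightarrow> real \<Rightarrow> real \<Rightarrow> ('a \<Rightarrow> 'a \<Rightarrow> real) \<Rightarrow> bool" where
  "kernel_class_H M d \<gamma> H K \<longleftrightarrow>
     (\<forall>x\<in>space M. \<forall>y\<in>space M. x \<noteq> y \<longrightarrow>
        (SUP \<eta>\<in>qball (space M) d y (\<gamma> * d x y). ereal (K x \<eta>))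
          \<le> ereal H * (INF \<eta>\<in>qball (space M) d y (\<gamma> * d x y). ereal (K x \<eta>)))"

definition Ktilde :: "'a measure \<Rightarrow> ('a \<Rightarrow> 'a \<Rightarrow> real) \<Rightarrow> real \<Rightarrow> ('a \<Rightarrow> 'a \<Rightarrow> real) \<Rightarrow> 'a \<Rightarrow> 'a \<Rightarrow> real" where
  "Ktilde M d \<gamma> K x y =
     (if x = y then K x x
      else (1 / measure M (qball (space M) d y (\<gamma> * d x y))) *
           (LINT z:qball (space M) d y (\<gamma> * d x y)|M. K x z))"

end

theory Submission
  imports Defs
begin

text \<open>On the ball B = B(y, \<gamma> d(x,y)), the class \<H>(\<gamma>,H) condition gives
  K(x,y)/H \<le> K(x,\<cdot>) \<le> H K(x,y), since y itself lies in B.  Averaging over B preserves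
  these bounds, which yields both inequalities (the diagonal case is trivial).\<close>

lemma set_average_between:
  fixes f :: "'a \<Rightarrow> real"
  assumes B: "B \<in> sets M" and fin: "emeasure M B < \<infinity>" and pos: "0 < emeasure M B"
    and f: "f \<in> borel_measurable M"
    and lower: "\<And>z. z \<in> B \<Longrightarrow> c \<le> f z" and upper: "\<And>z. z \<in> B \<Longrightarrow> f z \<le> C"
  shows "c \<le> (1 / measure M B) * (LINT z:B|M. f z)"
    and "(1 / measure M B) * (LINT z:B|M. f z) \<le> C"
proof -
  have fin': "emeasure M B \<noteq> \<infinity>" using fin by simp
  have measure_pos: "measure M B > 0"
    using fin pos by (simp add: emeasure_eq_ennreal_measure less_top)
  have const: "set_integrable M B (\<lambda>_. k)" for k :: real
    unfolding set_integrable_def using B fin' by (simp add: integrable_real_indicator less_top)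
  have integrable: "set_integrable M B f"
  proof (rule set_integrable_bound[OF const[of "max \<bar>c\<bar> \<bar>C\<bar>"]])
    show "set_borel_measurable M B f"
      using f B unfolding set_borel_measurable_def by measurable
    show "AE z in M. z \<in> B \<longrightarrow> norm (f z) \<le> norm (max \<bar>c\<bar> \<bar>C\<bar>)"
      using lower upper by (intro AE_I2) force
  qed
  have "c * measure M B \<le> (LINT z:B|M. f z)"
    using set_integral_mono[OF const[of c] integrable] lower set_integral_const[OF B fin', of c]
    by (simp add: mult.commute)
  moreover have "(LINT z:B|M. f z) \<le> C * measure M B"
    using set_integral_mono[OF integrable const[of C]] upper set_integral_const[OF B fin', of C]
    by (simp add: mult.commute)
  ultimately show "c \<le> (1 / measure M B) * (LINT z:B|M. f z)"
    and "(1 / measure M B) * (LINT z:B|M. f z) \<le> C"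
    using measure_pos by (simp_all add: field_simps)
qed

lemma homogeneous_type_qball_sets:
  assumes "homogeneous_type M d \<tau> A" "y \<in> space M"
  shows "qball (space M) d y r \<in> sets M"
  using assms unfolding homogeneous_type_def by blast

lemma homogeneous_type_qball_emeasure:
  assumes "homogeneous_type M d \<tau> A" "y \<in> space M" "0 < r"
  shows "0 < emeasure M (qball (space M) d y r)"
    and "emeasure M (qball (space M) d y r) < \<infinity>"
proof -
  have "\<forall>s>0. 0 < emeasure M (qball (space M) d y (2 * s)) \<and>
               emeasure M (qball (space M) d y s) < \<infinity>"
    using assms(1,2) unfolding homogeneous_type_def by blast
  from this[rule_format, of "r / 2"] and this[rule_format, of r] \<open>0 < r\<close>
  show "0 < emeasure M (qball (space M) d y r)"
    and "emeasure M (qball (space M) d y r) < \<infinity>"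
    by simp_all
qed

lemma quasi_distance_pos:
  assumes "quasi_distance X d \<tau>" "x \<in> X" "y \<in> X" "x \<noteq> y"
  shows "0 < d x y"
proof -
  have "0 \<le> d x y" "d x y \<noteq> 0"
    using assms unfolding quasi_distance_def by auto
  then show ?thesis by simp
qed

lemma quasi_distance_center_in_qball:
  assumes "quasi_distance X d \<tau>" "y \<in> X" "0 < r"
  shows "y \<in> qball X d y r"
proof -
  have "d y y = 0"
    using assms(1,2) unfolding quasi_distance_def by blast
  with assms(2,3) show ?thesis unfolding qball_def by simp
qed

lemma kernel_class_H_compare:
  assumes "kernel_class_H M d \<gamma> H K" "0 \<le> H"
    and "x \<in> space M" "y \<in> space M" "x \<noteq> y"
    and a: "a \<in> qball (space M) d y (\<gamma> * d x y)"
    and b: "b \<in> qball (space M) d y (\<gamma> * d x y)"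
  shows "K x a \<le> H * K x b"
proof -
  let ?B = "qball (space M) d y (\<gamma> * d x y)"
  have "ereal (K x a) \<le> (SUP \<eta>\<in>?B. ereal (K x \<eta>))"
    using a by (rule SUP_upper)
  also have "\<dots> \<le> ereal H * (INF \<eta>\<in>?B. ereal (K x \<eta>))"
    using assms(1,3-5) unfolding kernel_class_H_def by blast
  also have "\<dots> \<le> ereal H * ereal (K x b)"
    using b \<open>0 \<le> H\<close> by (intro ereal_mult_left_mono INF_lower) simp_all
  finally show ?thesis by simp
qed

lemma symmetric_markov_kernel_nonneg:
  assumes "symmetric_markov_kernel M K" "x \<in> space M" "y \<in> space M"
  shows "0 \<le> K x y"
  using assms unfolding symmetric_markov_kernel_def by blast

lemma symmetric_markov_kernel_measurable:
  assumes "symmetric_markov_kernel M K" "x \<in> space M"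
  shows "K x \<in> borel_measurable M"
proof -
  have "(\<lambda>(a, b). K a b) \<in> borel_measurable (M \<Otimes>\<^sub>M M)"
    using assms(1) unfolding symmetric_markov_kernel_def by blast
  then have "(\<lambda>(a, b). K a b) \<circ> Pair x \<in> borel_measurable M"
    using measurable_Pair1'[OF assms(2)] by (rule measurable_comp[rotated])
  then show ?thesis by (simp add: o_def)
qed

lemma Ktilde_between:
  assumes M: "homogeneous_type M d \<tau> A" and "0 < \<gamma>" and "1 \<le> H"
    and K: "symmetric_markov_kernel M K" "kernel_class_H M d \<gamma> H K"
    and x: "x \<in> space M" and y: "y \<in> space M"
  shows "K x y / H \<le> Ktilde M d \<gamma> K x y" and "Ktilde M d \<gamma> K x y \<le> H * K x y"
proof (atomize (full), cases "x = y")
  case True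
  have "K x x \<le> H * K x x"
    using mult_right_mono[OF \<open>1 \<le> H\<close> symmetric_markov_kernel_nonneg[OF K(1) x x]] by simp
  with \<open>1 \<le> H\<close> True show "K x y / H \<le> Ktilde M d \<gamma> K x y \<and> Ktilde M d \<gamma> K x y \<le> H * K x y"
    by (simp add: Ktilde_def divide_le_eq mult.commute)
next
  case False
  define B where "B = qball (space M) d y (\<gamma> * d x y)"
  have qd: "quasi_distance (space M) d \<tau>"
    using M unfolding homogeneous_type_def by blast
  have r: "0 < \<gamma> * d x y"
    using quasi_distance_pos[OF qd x y False] \<open>0 < \<gamma>\<close> by simp
  have yB: "y \<in> B"
    unfolding B_def using quasi_distance_center_in_qball[OF qd y r] .
  have compare: "K x a \<le> H * K x b" if "a \<in> B" "b \<in> B" for a b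
    using kernel_class_H_compare[OF K(2) _ x y False] that \<open>1 \<le> H\<close> by (simp add: B_def)
  have lower: "K x y / H \<le> K x z" if "z \<in> B" for z
    using compare[OF yB that] \<open>1 \<le> H\<close> by (simp add: divide_le_eq mult.commute)
  have upper: "K x z \<le> H * K x y" if "z \<in> B" for z
    using compare[OF that yB] .
  note average = set_average_between[OF _ _ _ symmetric_markov_kernel_measurable[OF K(1) x] lower upper]
  have "K x y / H \<le> (1 / measure M B) * (LINT z:B|M. K x z)"
       "(1 / measure M B) * (LINT z:B|M. K x z) \<le> H * K x y"
    using average homogeneous_type_qball_sets[OF M y] homogeneous_type_qball_emeasure[OF M y r]
    unfolding B_def by blast+
  then show "K x y / H \<le> Ktilde M d \<gamma> K x y \<and> Ktilde M d \<gamma> K x y \<le> H * K x y"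
    using False by (simp add: Ktilde_def B_def)
qed

theorem lemma4p2:
  fixes M :: "'a measure" and d :: "'a \<Rightarrow> 'a \<Rightarrow> real" and \<tau> A \<gamma> H :: real
    and \<K> :: "('a \<Rightarrow> 'a \<Rightarrow> real) set"
  assumes "homogeneous_type M d \<tau> A"
    and "unbounded_space M"
    and "0 < \<gamma>" and "\<gamma> < 1 / \<tau>"
    and "H \<ge> 1"
    and "\<forall>K\<in>\<K>. symmetric_markov_kernel M K"
    and "\<forall>K\<in>\<K>. kernel_class_H M d \<gamma> H K"
  shows "\<forall>K\<in>\<K>. \<forall>x\<in>space M. \<forall>y\<in>space M.
           K x y \<le> H * Ktilde M d \<gamma> K x y \<and> H * Ktilde M d \<gamma> K x y \<le> H\<^sup>2 * K x y"
proof (intro ballI)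
  fix K x y assume "K \<in> \<K>" and x: "x \<in> space M" and y: "y \<in> space M"
  then have K: "symmetric_markov_kernel M K" "kernel_class_H M d \<gamma> H K"
    using assms(6,7) by blast+
  note between = Ktilde_between[OF assms(1,3,5) K x y]
  have "0 < H" using assms(5) by simp
  then have "K x y \<le> H * Ktilde M d \<gamma> K x y" and "H * Ktilde M d \<gamma> K x y \<le> H * (H * K x y)"
    using between by (simp_all add: divide_le_eq mult.commute)
  then show "K x y \<le> H * Ktilde M d \<gamma> K x y \<and> H * Ktilde M d \<gamma> K x y \<le> H\<^sup>2 * K x y"
    by (simp add: power2_eq_square mult.assoc)
qed

end
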